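(* Assume $F$ is $\beta$-smooth and $T\ge2$. Run the framework with $\eta\le\frac{1}{\beta T}$. Then for any iteration $t\ge1$ of round $r\ge1$ and any client $i$, $$\|x^{(i)}_{r+1,t}-x_r\|^2\le2\eta^2T\sum_{\tau=1}^tS^{t-\tau}\,\Xi^{(i)}_{r+1,\tau}+22\eta^2T^2\|\nabla F(x_r)\|^2,$$ where $S=\frac{(T+1)^2}{T(T-1)}$ and $\Xi^{(i)}_{r,t}=\|\widehat g^{(i)}_{r,t-1}-\nabla F(x^{(i)}_{r,t-1})\|^2$.
   Context: **Objective.** $F=\frac1N\sum_{i=1}^Nf_i$ is the global objective of $N$ clients. **Framework.** For each round $r$: - each client sets $x^{(i)}_{r,0}=x_{r-1}$ and for $t=1,\dots,T$ updates $x^{(i)}_{r,t}=x^{(i)}_{r,t-1}-\eta\widehat g^{(i)}_{r,t-1}$, where $\widehat g^{(i)}_{r,t-1}$ is an arbitrary gradient estimate; - the server sets $x_r=\frac1N\sum_ix^{(i)}_{r,T}$. *)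

theory Defs
  imports "HOL-Analysis.Analysis"
begin

definition smooth_with_grad :: "real \<Rightarrow> ('a::euclidean_space \<Rightarrow> real) \<Rightarrow> ('a \<Rightarrow> 'a) \<Rightarrow> bool" where
  "smooth_with_grad \<beta> F gradF \<longleftrightarrow>
     (\<forall>x. (F has_derivative (\<lambda>h. gradF x \<bullet> h)) (at x)) \<and>
     (\<forall>x y. norm (gradF x - gradF y) \<le> \<beta> * norm (x - y))"

text \<open>The local-update framework: xs r = server iterate x_r, xc i r t = client iterate x^(i)_{r,t},
  g i r t = gradient estimate ghat^(i)_{r,t}. Clients are indexed by i < N, rounds r >= 1.\<close>
definition local_framework ::
  "nat \<Rightarrow> nat \<Rightarrow> real \<Rightarrow> (nat \<Rightarrow> 'a::real_vector) \<Rightarrow> (nat \<Rightarrow> nat \<Rightarrow> nat \<Rightarrow> 'a) \<Rightarrow> (nat \<Rightarrow> nat \<Rightarrow> nat \<Rightarrow> 'a) \<Rightarrow> bool" where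
  "local_framework N T \<eta> xs xc g \<longleftrightarrow>
     (\<forall>r\<ge>1. \<forall>i<N. xc i r 0 = xs (r - 1)) \<and>
     (\<forall>r\<ge>1. \<forall>i<N. \<forall>t\<in>{1..T}. xc i r t = xc i r (t - 1) - \<eta> *\<^sub>R g i r (t - 1)) \<and>
     (\<forall>r\<ge>1. xs r = (1 / real N) *\<^sub>R (\<Sum>i<N. xc i r T))"

end

theory Submission
  imports Defs
begin

text \<open>
  Write \<open>S = (T + 1)\<^sup>2 / (T (T - 1))\<close> and \<open>u k\<close> for the squared distance of the \<open>k\<close>-th
  local iterate of client \<open>i\<close> in round \<open>r + 1\<close> from \<open>x\<^sub>r\<close>. By smoothness, one local step
  multiplies the distance by at most \<open>1 + \<eta>\<beta> \<le> 1 + 1/T\<close> and adds \<open>\<eta>\<close> times the gradient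
  error plus \<open>\<eta> \<parallel>\<nabla>F(x\<^sub>r)\<parallel>\<close>. Squaring with Young's inequality of weight \<open>T - 1\<close> turns
  \<open>(1 + 1/T)\<^sup>2\<close> into \<open>S\<close>, so \<open>u (k + 1) \<le> S u k + 2\<eta>\<^sup>2T (\<Xi> (k + 1) + \<parallel>\<nabla>F(x\<^sub>r)\<parallel>\<^sup>2)\<close> with
  \<open>u 0 = 0\<close>. Unrolling this recurrence gives the error sum plus \<open>2\<eta>\<^sup>2T \<parallel>\<nabla>F(x\<^sub>r)\<parallel>\<^sup>2\<close> times
  the geometric sum of the \<open>S\<^sup>j\<close> for \<open>j < t\<close>, which is at most \<open>11 T\<close> because \<open>S\<^sup>T \<le> 34\<close>:
  for \<open>T \<ge> 3\<close> via \<open>S\<^sup>T \<le> exp (2 + T/(T - 1)) \<le> exp (7/2)\<close>, and directly for \<open>T = 2\<close>,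
  where that exponential bound is too weak.
\<close>

lemma perturbed_gradient_step_dist_le:
  fixes G :: "'a::real_normed_vector \<Rightarrow> 'a"
  assumes lipschitz: "\<And>x y. norm (G x - G y) \<le> \<beta> * norm (x - y)" and "\<eta> \<ge> 0"
  shows "norm (x - \<eta> *\<^sub>R v - x\<^sub>0)
    \<le> (1 + \<eta> * \<beta>) * norm (x - x\<^sub>0) + \<eta> * (norm (v - G x) + norm (G x\<^sub>0))"
proof -
  have "norm (x - \<eta> *\<^sub>R v - x\<^sub>0) = norm ((x - x\<^sub>0) - \<eta> *\<^sub>R (G x - G x\<^sub>0) - \<eta> *\<^sub>R ((v - G x) + G x\<^sub>0))"
    by (simp add: algebra_simps)
  also have "\<dots> \<le> norm (x - x\<^sub>0) + norm (\<eta> *\<^sub>R (G x - G x\<^sub>0)) + norm (\<eta> *\<^sub>R ((v - G x) + G x\<^sub>0))"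
    by (intro order_trans [OF norm_triangle_ineq4] add_mono norm_triangle_ineq4 order_refl)
  also have "\<dots> = norm (x - x\<^sub>0) + \<eta> * norm (G x - G x\<^sub>0) + \<eta> * norm ((v - G x) + G x\<^sub>0)"
    using assms(2) by simp
  also have "\<dots> \<le> norm (x - x\<^sub>0) + \<eta> * (\<beta> * norm (x - x\<^sub>0)) + \<eta> * (norm (v - G x) + norm (G x\<^sub>0))"
    using assms by (intro add_mono mult_left_mono lipschitz norm_triangle_ineq) auto
  finally show ?thesis
    by (simp add: algebra_simps)
qed

lemma young_square_le:
  fixes p q c :: real
  assumes "c > 0"
  shows "(p + q)\<^sup>2 \<le> (1 + 1 / c) * p\<^sup>2 + (1 + c) * q\<^sup>2"
proof -
  have "0 \<le> (p - c * q)\<^sup>2 / c"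
    using assms by simp
  also have "\<dots> = p\<^sup>2 / c - 2 * p * q + c * q\<^sup>2"
    using assms by (simp add: field_simps power2_eq_square)
  finally show ?thesis
    by (simp add: algebra_simps power2_eq_square)
qed

lemma square_le_drift_factor:
  fixes A B \<xi> \<gamma> \<eta> T :: real
  assumes "T > 1" "0 \<le> A" "0 \<le> B" "B \<le> (1 + 1 / T) * A + \<eta> * (\<xi> + \<gamma>)"
  shows "B\<^sup>2 \<le> (T + 1)\<^sup>2 / (T * (T - 1)) * A\<^sup>2 + 2 * T * \<eta>\<^sup>2 * (\<xi>\<^sup>2 + \<gamma>\<^sup>2)"
proof -
  have "B\<^sup>2 \<le> ((1 + 1 / T) * A + \<eta> * (\<xi> + \<gamma>))\<^sup>2"
    using assms by (intro power_mono) auto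
  also have "\<dots> \<le> (1 + 1 / (T - 1)) * ((1 + 1 / T) * A)\<^sup>2 + (1 + (T - 1)) * (\<eta> * (\<xi> + \<gamma>))\<^sup>2"
    using assms by (intro young_square_le) auto
  also have "(1 + 1 / (T - 1)) * ((1 + 1 / T) * A)\<^sup>2 = (T + 1)\<^sup>2 / (T * (T - 1)) * A\<^sup>2"
    using assms by (simp add: field_simps power2_eq_square)
  also have "(1 + (T - 1)) * (\<eta> * (\<xi> + \<gamma>))\<^sup>2 = T * \<eta>\<^sup>2 * (\<xi> + \<gamma>)\<^sup>2"
    by (simp add: power_mult_distrib)
  also have "\<dots> \<le> T * \<eta>\<^sup>2 * (2 * (\<xi>\<^sup>2 + \<gamma>\<^sup>2))"
    using young_square_le[of 1 \<xi> \<gamma>] assms by (intro mult_left_mono) auto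
  finally show ?thesis
    by (simp add: algebra_simps)
qed

lemma linear_recurrence_le:
  fixes u a :: "nat \<Rightarrow> real" and S c :: real
  assumes "S \<ge> 0" "u 0 \<le> 0"
    and step: "\<And>k. k < n \<Longrightarrow> u (Suc k) \<le> S * u k + a (Suc k) + c"
  shows "u n \<le> (\<Sum>\<tau>=1..n. S ^ (n - \<tau>) * a \<tau>) + c * (\<Sum>j<n. S ^ j)"
proof -
  have "u m \<le> (\<Sum>\<tau>=1..m. S ^ (m - \<tau>) * a \<tau>) + c * (\<Sum>j<m. S ^ j)" if "m \<le> n" for m
    using that
  proof (induction m)
    case 0
    then show ?case
      using assms(2) by simp
  next
    case (Suc m)
    have "(\<Sum>\<tau>=1..Suc m. S ^ (Suc m - \<tau>) * a \<tau>) = S * (\<Sum>\<tau>=1..m. S ^ (m - \<tau>) * a \<tau>) + a (Suc m)"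
      by (simp add: sum_distrib_left mult.assoc Suc_diff_le)
    moreover have "(\<Sum>j<Suc m. S ^ j) = S * (\<Sum>j<m. S ^ j) + 1"
      by (simp add: sum.lessThan_Suc_shift sum_distrib_left del: sum.lessThan_Suc)
    moreover have "u (Suc m) \<le> S * u m + a (Suc m) + c"
      using step Suc.prems by simp
    moreover have "S * u m \<le> S * ((\<Sum>\<tau>=1..m. S ^ (m - \<tau>) * a \<tau>) + c * (\<Sum>j<m. S ^ j))"
      using Suc assms(1) by (intro mult_left_mono) auto
    ultimately show ?case
      by (simp add: algebra_simps)
  qed
  then show ?thesis
    by simp
qed

lemma drift_factor_power_le:
  fixes T :: nat
  assumes "T \<ge> 2"
  shows "((real T + 1)\<^sup>2 / (real T * (real T - 1))) ^ T \<le> 34"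
proof (cases "T = 2")
  case True
  then show ?thesis
    by (simp add: power2_eq_square)
next
  case False
  then have T3: "real T \<ge> 3"
    using assms by simp
  have "(real T + 1)\<^sup>2 / (real T * (real T - 1)) = (1 + 1 / real T)\<^sup>2 * (1 + 1 / (real T - 1))"
    using T3 by (simp add: field_simps power2_eq_square)
  also have "\<dots> \<le> (exp (1 / real T))\<^sup>2 * exp (1 / (real T - 1))"
    using T3 by (intro mult_mono power_mono exp_ge_add_one_self) auto
  also have "\<dots> = exp (2 / real T + 1 / (real T - 1))"
    by (simp add: power2_eq_square exp_add [symmetric])
  finally have "((real T + 1)\<^sup>2 / (real T * (real T - 1))) ^ T
      \<le> exp (2 / real T + 1 / (real T - 1)) ^ T"
    using T3 by (intro power_mono) auto
  also have "\<dots> = exp (2 + real T / (real T - 1))"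
    using T3 by (simp add: exp_of_nat_mult [symmetric] field_simps)
  also have "\<dots> \<le> exp (7 / 2)"
    using T3 by (simp add: field_simps)
  also have "exp (7 / 2 :: real) \<le> 34"
  proof (rule power2_le_imp_le)
    have "exp (7 / 2 :: real) ^ 2 = exp 1 ^ 7"
      by (simp add: exp_of_nat_mult [symmetric])
    also have "\<dots> \<le> (272 / 100) ^ 7"
      using e_less_272 by (intro power_mono) auto
    finally show "exp (7 / 2 :: real) ^ 2 \<le> 34 ^ 2"
      by (simp add: power_divide)
  qed auto
  finally show ?thesis .
qed

lemma drift_factor_geometric_sum_le:
  fixes T t :: nat
  assumes "T \<ge> 2" "t \<le> T"
  shows "(\<Sum>j<t. ((real T + 1)\<^sup>2 / (real T * (real T - 1))) ^ j) \<le> 11 * real T"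
proof -
  define S where "S = (real T + 1)\<^sup>2 / (real T * (real T - 1))"
  have T2: "real T \<ge> 2"
    using assms by simp
  have S_minus_1: "S - 1 = (3 * real T + 1) / (real T * (real T - 1))"
    unfolding S_def using T2 by (simp add: field_simps power2_eq_square)
  moreover have "(3 * real T + 1) / (real T * (real T - 1)) > 0"
    using T2 by (intro divide_pos_pos mult_pos_pos) auto
  ultimately have "S > 1"
    by simp
  have "(S - 1) * (\<Sum>j<T. S ^ j) = S ^ T - 1"
    using one_diff_power_eq [of S T] by (simp add: algebra_simps)
  also have "\<dots> \<le> (S - 1) * (11 * real T)"
  proof -
    have "S ^ T \<le> 34"
      unfolding S_def using drift_factor_power_le [OF assms(1)] .
    moreover have "(S - 1) * (11 * real T) = 11 * (3 * real T + 1) / (real T - 1)"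
      unfolding S_minus_1 using T2 by (simp add: field_simps)
    moreover have "11 * (3 * real T + 1) / (real T - 1) \<ge> 33"
      using T2 by (simp add: field_simps)
    ultimately show ?thesis
      by linarith
  qed
  finally have "(\<Sum>j<T. S ^ j) \<le> 11 * real T"
    using \<open>S > 1\<close> by simp
  moreover have "(\<Sum>j<t. S ^ j) \<le> (\<Sum>j<T. S ^ j)"
    using assms \<open>S > 1\<close> by (intro sum_mono2) auto
  ultimately show ?thesis
    unfolding S_def by simp
qed

lemma local_framework_drift_step:
  fixes G :: "'a::real_normed_vector \<Rightarrow> 'a"
  assumes "local_framework N T \<eta> xs xc g" "i < N" "k < T" "T \<ge> 2"
    and lipschitz: "\<And>x y. norm (G x - G y) \<le> \<beta> * norm (x - y)"
    and "\<eta> \<ge> 0" "\<eta> * \<beta> \<le> 1 / real T"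
  shows "(norm (xc i (r + 1) (Suc k) - xs r))\<^sup>2
    \<le> (real T + 1)\<^sup>2 / (real T * (real T - 1)) * (norm (xc i (r + 1) k - xs r))\<^sup>2
      + 2 * real T * \<eta>\<^sup>2 * ((norm (g i (r + 1) k - G (xc i (r + 1) k)))\<^sup>2 + (norm (G (xs r)))\<^sup>2)"
proof -
  let ?x = "xc i (r + 1)"
  have "?x (Suc k) = ?x k - \<eta> *\<^sub>R g i (r + 1) k"
    using assms(1-3) unfolding local_framework_def by force
  then have "norm (?x (Suc k) - xs r)
      \<le> (1 + \<eta> * \<beta>) * norm (?x k - xs r) + \<eta> * (norm (g i (r + 1) k - G (?x k)) + norm (G (xs r)))"
    using perturbed_gradient_step_dist_le [OF lipschitz \<open>\<eta> \<ge> 0\<close>] by simp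
  also have "\<dots> \<le> (1 + 1 / real T) * norm (?x k - xs r)
      + \<eta> * (norm (g i (r + 1) k - G (?x k)) + norm (G (xs r)))"
    using assms(7) by (intro add_mono mult_right_mono) auto
  finally show ?thesis
    using assms(4) by (intro square_le_drift_factor) auto
qed

theorem lemmaC11:
  fixes f :: "nat \<Rightarrow> 'a::euclidean_space \<Rightarrow> real"
    and F :: "'a \<Rightarrow> real" and gradF :: "'a \<Rightarrow> 'a"
    and N T :: nat and \<beta> \<eta> :: real
    and xs :: "nat \<Rightarrow> 'a" and xc g :: "nat \<Rightarrow> nat \<Rightarrow> nat \<Rightarrow> 'a"
  assumes "N \<ge> 1"
    and "\<And>x. F x = (1 / real N) * (\<Sum>i<N. f i x)"
    and "\<beta> > 0" and "smooth_with_grad \<beta> F gradF"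
    and "T \<ge> 2"
    and "\<eta> > 0" and "\<eta> \<le> 1 / (\<beta> * real T)"
    and "local_framework N T \<eta> xs xc g"
    and "r \<ge> 1" and "1 \<le> t" and "t \<le> T" and "i < N"
  shows "(norm (xc i (r + 1) t - xs r))\<^sup>2
     \<le> 2 * \<eta>\<^sup>2 * real T *
         (\<Sum>\<tau>=1..t. ((real T + 1)\<^sup>2 / (real T * (real T - 1))) ^ (t - \<tau>)
              * (norm (g i (r + 1) (\<tau> - 1) - gradF (xc i (r + 1) (\<tau> - 1))))\<^sup>2)
       + 22 * \<eta>\<^sup>2 * (real T)\<^sup>2 * (norm (gradF (xs r)))\<^sup>2"
proof -
  define S where "S = (real T + 1)\<^sup>2 / (real T * (real T - 1))"
  define \<Xi> where "\<Xi> \<tau> = (norm (g i (r + 1) (\<tau> - 1) - gradF (xc i (r + 1) (\<tau> - 1))))\<^sup>2" for \<tau>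
  define u where "u k = (norm (xc i (r + 1) k - xs r))\<^sup>2" for k
  define c where "c = 2 * \<eta>\<^sup>2 * real T"
  have lipschitz: "\<And>x y. norm (gradF x - gradF y) \<le> \<beta> * norm (x - y)"
    using assms(4) unfolding smooth_with_grad_def by blast
  have "\<eta> * \<beta> \<le> 1 / real T"
    using assms(3,5,7) by (simp add: field_simps)
  then have recurrence: "u (Suc k) \<le> S * u k + c * \<Xi> (Suc k) + c * (norm (gradF (xs r)))\<^sup>2"
    if "k < t" for k
    using local_framework_drift_step [OF assms(8,12) _ assms(5) lipschitz, of k] that assms(6,11)
    by (simp add: u_def S_def \<Xi>_def c_def algebra_simps)
  have "u 0 = 0"
    using assms(8,12) unfolding local_framework_def u_def by auto
  then have "u t \<le> (\<Sum>\<tau>=1..t. S ^ (t - \<tau>) * (c * \<Xi> \<tau>)) + c * (norm (gradF (xs r)))\<^sup>2 * (\<Sum>j<t. S ^ j)"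
    using assms(5) recurrence by (intro linear_recurrence_le) (auto simp: S_def)
  also have "\<dots> \<le> (\<Sum>\<tau>=1..t. S ^ (t - \<tau>) * (c * \<Xi> \<tau>)) + c * (norm (gradF (xs r)))\<^sup>2 * (11 * real T)"
    unfolding S_def using drift_factor_geometric_sum_le [OF assms(5,11)] assms(6)
    by (intro add_left_mono mult_left_mono) (auto simp: c_def)
  finally show ?thesis
    by (simp add: u_def \<Xi>_def S_def c_def sum_distrib_left power2_eq_square mult_ac)
qed

end
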